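(* Fix an agent $i$ with $\theta_i^*\in\Theta_i$, let $\sigma^2>0$, and suppose the incentives $p_i(1),p_i(2),\dots$ are i.i.d. with $p_i(t)\sim\mathcal N(0,\sigma^2)$, and $x_i(t)=x_i^*(p_i(t))$. Let $\Sigma_i(0)\succ0$ and $\Sigma_i(t)^{-1}=\Sigma_i(t-1)^{-1}+\delta_i(t)\xi_i(t)\xi_i(t)^\top$. Then $\lambda_i(t):=\lambda_{\min}(\Sigma_i(t)^{-1})=\Theta(t)$ almost surely, i.e., there are (random) constants $0<c_1\le c_2$ with $c_1t\le\lambda_i(t)\le c_2t$ for all sufficiently large $t$, a.s.
   Context: $\mathcal X_i\subset\mathbb R$ is a compact interval with nonempty interior; $\Phi(x)=(x,x^2,\dots,x^d)^\top$; $\Theta_i=\{\theta\in\mathbb R^d: m_i\le\theta^\top\nabla^2\Phi(x)\le M_i\ \forall x\in\mathcal X_i\}$ for constants $0<m_i\le M_i$. The best response to incentive $p$ is $x_i^*(p)=\arg\min_{x\in\mathcal X_i}(\theta_i^{*\top}\Phi(x)+px)$. $\xi_i(t)=\nabla\Phi(x_i(t))$ and $\delta_i(t)=\mathbf 1\{x_i(t)\in\operatorname{int}\mathcal X_i\}$. *)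

theory Defs
  imports "HOL-Probability.Probability" "Jordan_Normal_Form.Char_Poly"
begin

text \<open>Vectors in R^d are JNF vectors of dimension d; component k of the paper
  (k = 1..d) is stored at index k-1.\<close>

definition Phi :: "nat \<Rightarrow> real \<Rightarrow> real vec" where
  "Phi d x = vec d (\<lambda>i. x ^ Suc i)"

definition gradPhi :: "nat \<Rightarrow> real \<Rightarrow> real vec" where
  "gradPhi d x = vec d (\<lambda>i. real (Suc i) * x ^ i)"

definition hessPhi :: "nat \<Rightarrow> real \<Rightarrow> real vec" where
  "hessPhi d x = vec d (\<lambda>i. real (Suc i * i) * x ^ (i - 1))"

definition Theta_set :: "nat \<Rightarrow> real set \<Rightarrow> real \<Rightarrow> real \<Rightarrow> real vec set" where
  "Theta_set d X m M = {\<theta> \<in> carrier_vec d. \<forall>x\<in>X. m \<le> \<theta> \<bullet> hessPhi d x \<and> \<theta> \<bullet> hessPhi d x \<le> M}"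

definition best_response :: "real vec \<Rightarrow> real set \<Rightarrow> real \<Rightarrow> real" where
  "best_response \<theta> X p = arg_min_on (\<lambda>x. \<theta> \<bullet> Phi (dim_vec \<theta>) x + p * x) X"

definition outer :: "real vec \<Rightarrow> real mat" where
  "outer v = mat (dim_vec v) (dim_vec v) (\<lambda>(i,j). v $ i * v $ j)"

definition pos_def :: "real mat \<Rightarrow> bool" where
  "pos_def A \<longleftrightarrow> A \<in> carrier_mat (dim_row A) (dim_row A) \<and> A\<^sup>T = A \<and>
     (\<forall>v \<in> carrier_vec (dim_row A). v \<noteq> 0\<^sub>v (dim_row A) \<longrightarrow> v \<bullet> (A *\<^sub>v v) > 0)"

definition lambda_min :: "real mat \<Rightarrow> real" where
  "lambda_min A = Min {k. eigenvalue A k}"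

end

(*
  Unrolling the recursion, v^T Lam(t) v = v^T Lam(0) v + sum_{s <= t} delta(s) (v^T grad Phi(x(s)))^2,
  and every summand is at most a constant times |v|^2; this gives the upper bound.

  For the lower bound choose d distinct interior points z_k. The vectors grad Phi(z_k) are linearly
  independent (v^T grad Phi is a polynomial of degree < d), so sum_k (v^T grad Phi(z_k))^2 >= mu |v|^2.
  The marginal cost theta^T grad Phi is strictly increasing, hence the incentives in a short interval
  P_k have interior best responses so close to z_k that their excitation is at least
  (v^T grad Phi(z_k))^2 / 2 - mu |v|^2 / (4 d). Each P_k has positive Gaussian probability, so by
  Hoeffding's inequality and Borel-Cantelli it is hit linearly often, almost surely; summing over k
  gives v^T Lam(t) v >= c t |v|^2 eventually. Both bounds pass to lambda_min via the Rayleigh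
  quotient, because a real symmetric matrix has a real eigenvalue.
*)

theory Submission
  imports Defs
begin

no_notation inner (infix "\<bullet>" 70)
no_notation vec_nth (infixl "$" 90)

section \<open>Quadratic forms and the smallest eigenvalue\<close>

lemma scalar_prod_self_eq_sum_sq:
  "(v :: real vec) \<in> carrier_vec n \<Longrightarrow> v \<bullet> v = (\<Sum>i<n. (v $ i)\<^sup>2)"
  by (simp add: scalar_prod_def power2_eq_square lessThan_atLeast0)

lemma scalar_prod_self_nonneg [simp]: "0 \<le> (v :: real vec) \<bullet> v"
  using conjugate_square_ge_0_vec[of v] by simp

lemma scalar_prod_self_pos: "(v :: real vec) \<in> carrier_vec n \<Longrightarrow> v \<noteq> 0\<^sub>v n \<Longrightarrow> 0 < v \<bullet> v"
  using conjugate_square_greater_0_vec[of v n] by simp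

lemma scalar_prod_sq_le:
  assumes "(v :: real vec) \<in> carrier_vec n" "w \<in> carrier_vec n"
  shows "(v \<bullet> w)\<^sup>2 \<le> (v \<bullet> v) * (w \<bullet> w)"
proof -
  have "v \<bullet> w = (\<Sum>i<n. v $ i * w $ i)"
    using assms by (simp add: scalar_prod_def lessThan_atLeast0)
  then show ?thesis
    using Cauchy_Schwarz_ineq_sum[of "\<lambda>i. v $ i" "\<lambda>i. w $ i" "{..<n}"]
    by (simp add: scalar_prod_self_eq_sum_sq[OF assms(1)] scalar_prod_self_eq_sum_sq[OF assms(2)])
qed

lemma mult_mat_vec_sq_le:
  assumes B: "(B :: real mat) \<in> carrier_mat n k" and v: "v \<in> carrier_vec k"
  shows "(B *\<^sub>v v) \<bullet> (B *\<^sub>v v) \<le> (\<Sum>i<n. \<Sum>j<k. (B $$ (i,j))\<^sup>2) * (v \<bullet> v)"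
proof -
  have "(B *\<^sub>v v) \<bullet> (B *\<^sub>v v) = (\<Sum>i<n. (row B i \<bullet> v)\<^sup>2)"
    using B v by (subst scalar_prod_self_eq_sum_sq[of _ n]) auto
  also have "\<dots> \<le> (\<Sum>i<n. (\<Sum>j<k. (B $$ (i,j))\<^sup>2) * (v \<bullet> v))"
  proof (rule sum_mono)
    fix i assume "i \<in> {..<n}"
    then have r: "row B i \<in> carrier_vec k" "row B i \<bullet> row B i = (\<Sum>j<k. (B $$ (i,j))\<^sup>2)"
      using B by (auto intro!: carrier_vecI simp: scalar_prod_def power2_eq_square lessThan_atLeast0)
    then show "(row B i \<bullet> v)\<^sup>2 \<le> (\<Sum>j<k. (B $$ (i,j))\<^sup>2) * (v \<bullet> v)"
      using scalar_prod_sq_le[OF r(1) v] by (simp add: mult.commute)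
  qed
  also have "\<dots> = (\<Sum>i<n. \<Sum>j<k. (B $$ (i,j))\<^sup>2) * (v \<bullet> v)"
    by (simp add: sum_distrib_right)
  finally show ?thesis .
qed

lemma quadratic_form_le:
  assumes L: "(L :: real mat) \<in> carrier_mat n n"
  obtains C where "0 \<le> C" "\<And>v. v \<in> carrier_vec n \<Longrightarrow> v \<bullet> (L *\<^sub>v v) \<le> C * (v \<bullet> v)"
proof
  define K where "K = (\<Sum>i<n. \<Sum>j<n. (L $$ (i,j))\<^sup>2)"
  have K: "0 \<le> K" unfolding K_def by (intro sum_nonneg) auto
  show "0 \<le> sqrt K" using K by simp
  fix v :: "real vec" assume v: "v \<in> carrier_vec n"
  have "(v \<bullet> (L *\<^sub>v v))\<^sup>2 \<le> (v \<bullet> v) * ((L *\<^sub>v v) \<bullet> (L *\<^sub>v v))"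
    using L v by (intro scalar_prod_sq_le) auto
  also have "\<dots> \<le> (v \<bullet> v) * (K * (v \<bullet> v))"
    unfolding K_def using mult_mat_vec_sq_le[OF L v] by (intro mult_left_mono) auto
  also have "\<dots> = (sqrt K * (v \<bullet> v))\<^sup>2"
    using K by (simp add: power2_eq_square)
  finally show "v \<bullet> (L *\<^sub>v v) \<le> sqrt K * (v \<bullet> v)"
    by (rule power2_le_imp_le) (simp add: K)
qed

lemma det_nonzero_quadratic_lower_bound:
  assumes V: "(V :: real mat) \<in> carrier_mat n n" and det: "det V \<noteq> 0"
  obtains \<mu> where "0 < \<mu>" "\<And>v. v \<in> carrier_vec n \<Longrightarrow> \<mu> * (v \<bullet> v) \<le> (V *\<^sub>v v) \<bullet> (V *\<^sub>v v)"
proof -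
  obtain B where B: "B \<in> carrier_mat n n" "B * V = 1\<^sub>m n"
    using det_non_zero_imp_unit[OF V det] unfolding Units_def ring_mat_def by auto
  define K where "K = (\<Sum>i<n. \<Sum>j<n. (B $$ (i,j))\<^sup>2)"
  have K: "0 \<le> K" unfolding K_def by (intro sum_nonneg) auto
  show ?thesis
  proof
    show "0 < 1 / (K + 1)" using K by simp
    fix v :: "real vec" assume v: "v \<in> carrier_vec n"
    have "v = (B * V) *\<^sub>v v" using B v by simp
    also have "\<dots> = B *\<^sub>v (V *\<^sub>v v)" by (rule assoc_mult_mat_vec[OF B(1) V v])
    finally have "v \<bullet> v = (B *\<^sub>v (V *\<^sub>v v)) \<bullet> (B *\<^sub>v (V *\<^sub>v v))"
      by (rule arg_cong[where f = "\<lambda>u. u \<bullet> u"])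
    also have "\<dots> \<le> K * ((V *\<^sub>v v) \<bullet> (V *\<^sub>v v))"
      unfolding K_def using mult_mat_vec_sq_le[OF B(1), of "V *\<^sub>v v"] V v by simp
    also have "\<dots> \<le> (K + 1) * ((V *\<^sub>v v) \<bullet> (V *\<^sub>v v))"
      by (intro mult_right_mono) auto
    finally show "1 / (K + 1) * (v \<bullet> v) \<le> (V *\<^sub>v v) \<bullet> (V *\<^sub>v v)"
      using K by (simp add: field_simps)
  qed
qed

lemma sum_sq_scalar_prod_lower_bound:
  fixes w :: "nat \<Rightarrow> real vec"
  assumes w: "\<And>k. k < n \<Longrightarrow> w k \<in> carrier_vec n"
    and spanning: "\<And>v. v \<in> carrier_vec n \<Longrightarrow> (\<And>k. k < n \<Longrightarrow> v \<bullet> w k = 0) \<Longrightarrow> v = 0\<^sub>v n"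
  obtains \<mu> where "0 < \<mu>" "\<And>v. v \<in> carrier_vec n \<Longrightarrow> \<mu> * (v \<bullet> v) \<le> (\<Sum>k<n. (v \<bullet> w k)\<^sup>2)"
proof -
  define V :: "real mat" where "V = mat n n (\<lambda>(k,i). w k $ i)"
  have V: "V \<in> carrier_mat n n" by (simp add: V_def)
  have V_row: "(V *\<^sub>v v) $ k = v \<bullet> w k" if "k < n" "v \<in> carrier_vec n" for k v
  proof -
    have "row V k = w k" using that w[OF that(1)] by (intro eq_vecI) (auto simp: V_def)
    then show ?thesis using that V w comm_scalar_prod[of v n "w k"] by simp
  qed
  have "det V \<noteq> 0"
  proof
    assume "det V = 0"
    then obtain v where v: "v \<in> carrier_vec n" "v \<noteq> 0\<^sub>v n" "V *\<^sub>v v = 0\<^sub>v n"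
      using det_0_iff_vec_prod_zero[OF V] by blast
    have "v \<bullet> w k = 0" if "k < n" for k
      using V_row[OF that v(1)] v(3) that by simp
    then show False using spanning[OF v(1)] v(2) by blast
  qed
  moreover have "(V *\<^sub>v v) \<bullet> (V *\<^sub>v v) = (\<Sum>k<n. (v \<bullet> w k)\<^sup>2)" if "v \<in> carrier_vec n" for v
    using V that V_row by (subst scalar_prod_self_eq_sum_sq[of _ n]) auto
  ultimately show ?thesis
    using det_nonzero_quadratic_lower_bound[OF V] that by metis
qed

lemma sym_mat_real_eigenvalue_exists:
  fixes A :: "real mat"
  assumes A: "A \<in> carrier_mat n n" and sym: "A\<^sup>T = A" and n: "0 < n"
  obtains k where "eigenvalue A k"
proof -
  define Ac :: "complex mat" where "Ac = map_mat complex_of_real A"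
  have Ac: "Ac \<in> carrier_mat n n" using A by (simp add: Ac_def)
  have "\<not> constant (poly (char_poly Ac))"
    using degree_monic_char_poly[OF Ac] n by (simp add: constant_degree)
  then obtain l where "poly (char_poly Ac) l = 0"
    using fundamental_theorem_of_algebra by blast
  then obtain w where "eigenvector Ac w l"
    using eigenvalue_root_char_poly[OF Ac] unfolding eigenvalue_def by blast
  then have w: "w \<in> carrier_vec n" "w \<noteq> 0\<^sub>v n" and ev: "Ac *\<^sub>v w = l \<cdot>\<^sub>v w"
    using Ac unfolding eigenvector_def by auto
  have AcT: "Ac\<^sup>T = Ac"
    using sym A unfolding Ac_def by (metis map_mat_transpose)
  have conj_ev: "Ac *\<^sub>v conjugate w = cnj l \<cdot>\<^sub>v conjugate w"
  proof -
    have "Ac *\<^sub>v conjugate w = conjugate (Ac *\<^sub>v w)"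
      using Ac w by (intro eq_vecI)
        (auto simp: Ac_def scalar_prod_def sum_conjugate conjugate_dist_mul)
    then show ?thesis using ev by (simp add: conjugate_smult_vec)
  qed
  have "l * (w \<bullet>c w) = (Ac *\<^sub>v w) \<bullet>c w"
    using w by (simp add: ev)
  also have "\<dots> = w \<bullet> (Ac *\<^sub>v conjugate w)"
    using transpose_vec_mult_scalar[OF Ac, of "conjugate w" w] w AcT by simp
  also have "\<dots> = cnj l * (w \<bullet>c w)"
    using w by (simp add: conj_ev)
  finally have "cnj l = l"
    using w conjugate_square_eq_0_vec[OF w(1)] by simp
  then have l_real: "l = complex_of_real (Re l)"
    by (metis Reals_cnj_iff of_real_Re)
  have "poly (char_poly Ac) l = complex_of_real (poly (char_poly A) (Re l))"
    unfolding Ac_def of_real_hom.char_poly_hom[OF A] by (subst l_real) simp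
  with \<open>poly (char_poly Ac) l = 0\<close> have "poly (char_poly A) (Re l) = 0" by simp
  then show ?thesis using eigenvalue_root_char_poly[OF A] that by blast
qed

lemma finite_eigenvalues:
  assumes "(A :: real mat) \<in> carrier_mat n n"
  shows "finite {k. eigenvalue A k}"
proof -
  have "char_poly A \<noteq> 0" using degree_monic_char_poly[OF assms] by auto
  then show ?thesis
    using poly_roots_finite eigenvalue_root_char_poly[OF assms] by simp
qed

lemma eigenvalue_eq_Rayleigh_quotient:
  assumes "(A :: real mat) \<in> carrier_mat n n" "eigenvalue A k"
  obtains v where "v \<in> carrier_vec n" "0 < v \<bullet> v" "v \<bullet> (A *\<^sub>v v) = k * (v \<bullet> v)"
  using assms scalar_prod_self_pos unfolding eigenvalue_def eigenvector_def by auto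

lemma lambda_min_ge:
  assumes A: "(A :: real mat) \<in> carrier_mat n n" and sym: "A\<^sup>T = A" and n: "0 < n"
    and quad: "\<And>v. v \<in> carrier_vec n \<Longrightarrow> c * (v \<bullet> v) \<le> v \<bullet> (A *\<^sub>v v)"
  shows "c \<le> lambda_min A"
  unfolding lambda_min_def
proof (subst Min_ge_iff)
  show "finite {k. eigenvalue A k}" using A by (rule finite_eigenvalues)
  show "{k. eigenvalue A k} \<noteq> {}"
    using sym_mat_real_eigenvalue_exists[OF A sym n] by blast
  show "\<forall>k\<in>{k. eigenvalue A k}. c \<le> k"
  proof
    fix k assume "k \<in> {k. eigenvalue A k}"
    then obtain v where "v \<in> carrier_vec n" "0 < v \<bullet> v" "v \<bullet> (A *\<^sub>v v) = k * (v \<bullet> v)"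
      using eigenvalue_eq_Rayleigh_quotient[OF A] by blast
    then show "c \<le> k" using quad by (metis mult_le_cancel_right_pos)
  qed
qed

lemma lambda_min_le:
  assumes A: "(A :: real mat) \<in> carrier_mat n n" and sym: "A\<^sup>T = A" and n: "0 < n"
    and quad: "\<And>v. v \<in> carrier_vec n \<Longrightarrow> v \<bullet> (A *\<^sub>v v) \<le> C * (v \<bullet> v)"
  shows "lambda_min A \<le> C"
proof -
  obtain k where k: "eigenvalue A k" using sym_mat_real_eigenvalue_exists[OF A sym n] .
  then obtain v where "v \<in> carrier_vec n" "0 < v \<bullet> v" "v \<bullet> (A *\<^sub>v v) = k * (v \<bullet> v)"
    using eigenvalue_eq_Rayleigh_quotient[OF A] by blast
  then have "k \<le> C" using quad by (metis mult_le_cancel_right_pos)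
  moreover have "lambda_min A \<le> k"
    unfolding lambda_min_def using finite_eigenvalues[OF A] k by (intro Min_le) auto
  ultimately show ?thesis by simp
qed

lemma pos_def_inverse:
  assumes S: "S \<in> carrier_mat n n" and pd: "pos_def S"
    and L: "L \<in> carrier_mat n n" and LS: "L * S = 1\<^sub>m n"
  shows "L\<^sup>T = L" and "\<And>v. v \<in> carrier_vec n \<Longrightarrow> 0 \<le> v \<bullet> (L *\<^sub>v v)"
proof -
  have SL: "S * L = 1\<^sub>m n" by (rule mat_mult_left_right_inverse[OF L S LS])
  have ST: "S\<^sup>T = S" using pd unfolding pos_def_def by auto
  have "S * L\<^sup>T = 1\<^sub>m n"
    using transpose_mult[OF L S] LS ST by simp
  then have "L = (L * S) * L\<^sup>T"
    using L S by (simp add: assoc_mult_mat[of L n n S n "L\<^sup>T" n])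
  then show "L\<^sup>T = L" using LS L by simp
  fix v :: "real vec" assume v: "v \<in> carrier_vec n"
  define u where "u = L *\<^sub>v v"
  have u: "u \<in> carrier_vec n" using L v by (simp add: u_def)
  have "S *\<^sub>v u = v"
    unfolding u_def using S L v SL by (simp flip: assoc_mult_mat_vec)
  then have "v \<bullet> (L *\<^sub>v v) = u \<bullet> (S *\<^sub>v u)"
    using comm_scalar_prod[OF u v] by (simp add: u_def)
  also have "0 \<le> u \<bullet> (S *\<^sub>v u)"
    using pd u S unfolding pos_def_def by (cases "u = 0\<^sub>v n") (auto intro: less_imp_le)
  finally show "0 \<le> v \<bullet> (L *\<^sub>v v)" .
qed

lemma outer_carrier [simp]: "outer (v :: real vec) \<in> carrier_mat (dim_vec v) (dim_vec v)"
  by (simp add: outer_def)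

lemma transpose_outer [simp]: "(outer (v :: real vec))\<^sup>T = outer v"
  by (rule eq_matI) (auto simp: outer_def mult.commute)

lemma quadratic_form_outer:
  assumes "(v :: real vec) \<in> carrier_vec n" "w \<in> carrier_vec n"
  shows "v \<bullet> (outer w *\<^sub>v v) = (v \<bullet> w)\<^sup>2"
proof -
  have "outer w *\<^sub>v v = (w \<bullet> v) \<cdot>\<^sub>v w"
    using assms by (intro eq_vecI)
      (auto simp: outer_def scalar_prod_def sum_distrib_left mult_ac)
  then show ?thesis
    using assms comm_scalar_prod[of v n w] by (simp add: power2_eq_square)
qed

section \<open>The feature map and best responses\<close>

lemma gradPhi_carrier [simp]: "gradPhi d y \<in> carrier_vec d"
  by (simp add: gradPhi_def)

lemma outer_gradPhi_carrier [simp]: "outer (gradPhi d y) \<in> carrier_mat d d"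
  using outer_carrier[of "gradPhi d y"] by (simp add: gradPhi_def)

lemma scalar_prod_Phi: "(v :: real vec) \<in> carrier_vec d \<Longrightarrow> v \<bullet> Phi d y = (\<Sum>i<d. v $ i * y ^ Suc i)"
  by (simp add: scalar_prod_def Phi_def lessThan_atLeast0)

lemma scalar_prod_gradPhi:
  "(v :: real vec) \<in> carrier_vec d \<Longrightarrow> v \<bullet> gradPhi d y = (\<Sum>i<d. v $ i * (real (Suc i) * y ^ i))"
  by (simp add: scalar_prod_def gradPhi_def lessThan_atLeast0)

lemma scalar_prod_hessPhi:
  "(v :: real vec) \<in> carrier_vec d \<Longrightarrow> v \<bullet> hessPhi d y = (\<Sum>i<d. v $ i * (real (Suc i * i) * y ^ (i - 1)))"
  by (simp add: scalar_prod_def hessPhi_def lessThan_atLeast0)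

lemma has_real_derivative_Phi:
  assumes "(v :: real vec) \<in> carrier_vec d"
  shows "((\<lambda>y. v \<bullet> Phi d y) has_real_derivative v \<bullet> gradPhi d y) (at y)"
proof -
  have "((\<lambda>y. \<Sum>i<d. v $ i * y ^ Suc i) has_real_derivative
      (\<Sum>i<d. v $ i * (real (Suc i) * y ^ i))) (at y)"
    by (intro DERIV_sum DERIV_cmult) (use DERIV_pow[of "Suc _" y] in simp)
  then show ?thesis using assms by (simp add: scalar_prod_Phi scalar_prod_gradPhi)
qed

lemma has_real_derivative_gradPhi:
  assumes "(v :: real vec) \<in> carrier_vec d"
  shows "((\<lambda>y. v \<bullet> gradPhi d y) has_real_derivative v \<bullet> hessPhi d y) (at y)"
proof -
  have "((\<lambda>y. real (Suc i) * y ^ i) has_real_derivative real (Suc i * i) * y ^ (i - 1)) (at y)" for i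
  proof -
    have "real (Suc i * i) * y ^ (i - 1) = real (Suc i) * (real i * y ^ (i - Suc 0))"
      by (simp add: algebra_simps)
    then show ?thesis by (simp only:) (intro DERIV_cmult DERIV_pow)
  qed
  then have "((\<lambda>y. \<Sum>i<d. v $ i * (real (Suc i) * y ^ i)) has_real_derivative
      (\<Sum>i<d. v $ i * (real (Suc i * i) * y ^ (i - 1)))) (at y)"
    by (intro DERIV_sum DERIV_cmult)
  then show ?thesis using assms by (simp add: scalar_prod_gradPhi scalar_prod_hessPhi)
qed

lemma continuous_on_gradPhi:
  assumes "(v :: real vec) \<in> carrier_vec d"
  shows "continuous_on S (\<lambda>y. v \<bullet> gradPhi d y)"
proof -
  have "isCont (\<lambda>y. v \<bullet> gradPhi d y) x" for x
    using has_real_derivative_gradPhi[OF assms] by (rule DERIV_isCont)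
  then show ?thesis by (simp add: continuous_at_imp_continuous_on)
qed

lemma Theta_set_gradPhi_increasing:
  assumes \<theta>: "\<theta> \<in> Theta_set d {a..b} m M" and yz: "a \<le> y" "y \<le> z" "z \<le> b"
  shows "m * (z - y) \<le> \<theta> \<bullet> gradPhi d z - \<theta> \<bullet> gradPhi d y"
proof (cases "y = z")
  case False
  have \<theta>c: "\<theta> \<in> carrier_vec d" and hess: "\<And>x. x \<in> {a..b} \<Longrightarrow> m \<le> \<theta> \<bullet> hessPhi d x"
    using \<theta> unfolding Theta_set_def by auto
  obtain c where c: "y < c" "c < z"
    and mvt: "\<theta> \<bullet> gradPhi d z - \<theta> \<bullet> gradPhi d y = (z - y) * (\<theta> \<bullet> hessPhi d c)"
    using MVT2[of y z "\<lambda>y. \<theta> \<bullet> gradPhi d y"] has_real_derivative_gradPhi[OF \<theta>c] False yz by force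
  have "m \<le> \<theta> \<bullet> hessPhi d c" using hess c yz by auto
  then show ?thesis using mvt c by (simp add: mult.commute mult_left_mono)
qed simp

lemma arg_min_on_eqI:
  fixes f :: "'a \<Rightarrow> 'b :: linorder"
  assumes "y \<in> S" and "\<And>z. z \<in> S \<Longrightarrow> z \<noteq> y \<Longrightarrow> f y < f z"
  shows "arg_min_on f S = y"
  unfolding arg_min_on_def
proof (rule arg_minI[where x = y])
  show "y \<in> S" by fact
  show "\<not> f z < f y" if "z \<in> S" for z
    using assms(2)[OF that] by (cases "z = y") auto
  show "x = y" if "x \<in> S" "\<forall>z. z \<in> S \<longrightarrow> \<not> f z < f x" for x
    using assms that by force
qed

lemma strict_min_if_derivative_sign:
  fixes G G' :: "real \<Rightarrow> real"
  assumes G': "\<And>c. (G has_real_derivative G' c) (at c)"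
    and sign: "\<And>c. c \<in> {a..b} \<Longrightarrow> c \<noteq> y \<Longrightarrow> 0 < G' c * (c - y)"
    and y: "y \<in> {a..b}" and z: "z \<in> {a..b}" "z \<noteq> y"
  shows "G y < G z"
proof -
  have G_cont: "continuous_on S G" for S
    using G' by (intro continuous_at_imp_continuous_on ballI DERIV_isCont) blast
  show ?thesis
  proof (cases "y < z")
    case True
    show ?thesis
    proof (rule DERIV_pos_imp_increasing_open[OF True _ G_cont])
      fix c assume "y < c" "c < z"
      then have "0 < G' c" using sign[of c] y z by (simp add: zero_less_mult_iff)
      then show "\<exists>D. (G has_real_derivative D) (at c) \<and> 0 < D" using G' by blast
    qed
  next
    case False
    then have "z < y" using z by simp
    then show ?thesis
    proof (rule DERIV_neg_imp_decreasing_open[OF _ _ G_cont])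
      fix c assume "z < c" "c < y"
      then have "G' c < 0" using sign[of c] y z by (simp add: zero_less_mult_iff)
      then show "\<exists>D. (G has_real_derivative D) (at c) \<and> D < 0" using G' by blast
    qed
  qed
qed

lemma best_response_eqI:
  assumes \<theta>: "\<theta> \<in> Theta_set d {a..b} m M" and m: "0 < m"
    and y: "y \<in> {a..b}" and foc: "\<theta> \<bullet> gradPhi d y + p = 0"
  shows "best_response \<theta> {a..b} p = y"
proof -
  have \<theta>c: "\<theta> \<in> carrier_vec d" using \<theta> unfolding Theta_set_def by auto
  define G where "G = (\<lambda>z. \<theta> \<bullet> Phi d z + p * z)"
  have G': "(G has_real_derivative \<theta> \<bullet> gradPhi d z - \<theta> \<bullet> gradPhi d y) (at z)" for z
  proof -
    have "(G has_real_derivative \<theta> \<bullet> gradPhi d z + p) (at z)"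
      using DERIV_add[OF has_real_derivative_Phi[OF \<theta>c] DERIV_cmult_Id[of p]]
      unfolding G_def by simp
    then show ?thesis by (rule DERIV_cong) (use foc in linarith)
  qed
  have sign: "0 < (\<theta> \<bullet> gradPhi d c - \<theta> \<bullet> gradPhi d y) * (c - y)" if "c \<in> {a..b}" "c \<noteq> y" for c
  proof (cases "y < c")
    case True
    have "0 < m * (c - y)" using m True by simp
    also have "\<dots> \<le> \<theta> \<bullet> gradPhi d c - \<theta> \<bullet> gradPhi d y"
      using Theta_set_gradPhi_increasing[OF \<theta>, of y c] that y True by simp
    finally show ?thesis using True by (simp add: zero_less_mult_iff)
  next
    case False
    then have "c < y" using that by simp
    have "0 < m * (y - c)" using m \<open>c < y\<close> by simp
    also have "\<dots> \<le> \<theta> \<bullet> gradPhi d y - \<theta> \<bullet> gradPhi d c"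
      using Theta_set_gradPhi_increasing[OF \<theta>, of c y] that y \<open>c < y\<close> by simp
    finally show ?thesis using \<open>c < y\<close> by (simp add: zero_less_mult_iff)
  qed
  have "arg_min_on G {a..b} = y"
    using y strict_min_if_derivative_sign[OF G' sign] by (intro arg_min_on_eqI) auto
  then show ?thesis using \<theta>c unfolding best_response_def G_def by simp
qed

lemma best_response_mem_Icc:
  assumes \<theta>: "\<theta> \<in> Theta_set d {a..b} m M" and m: "0 < m"
    and \<alpha>\<gamma>: "a \<le> \<alpha>" "\<alpha> \<le> \<gamma>" "\<gamma> \<le> b"
    and p: "p \<in> {- (\<theta> \<bullet> gradPhi d \<gamma>) .. - (\<theta> \<bullet> gradPhi d \<alpha>)}"
  shows "best_response \<theta> {a..b} p \<in> {\<alpha>..\<gamma>}"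
proof -
  have \<theta>c: "\<theta> \<in> carrier_vec d" using \<theta> unfolding Theta_set_def by auto
  obtain y where y: "\<alpha> \<le> y" "y \<le> \<gamma>" "\<theta> \<bullet> gradPhi d y = - p"
    using IVT'[of "\<lambda>y. \<theta> \<bullet> gradPhi d y" \<alpha> "- p" \<gamma>] continuous_on_gradPhi[OF \<theta>c] p \<alpha>\<gamma> by auto
  then have "best_response \<theta> {a..b} p = y"
    using \<alpha>\<gamma> by (intro best_response_eqI[OF \<theta> m]) auto
  then show ?thesis using y by simp
qed

section \<open>Persistent excitation\<close>

lemma gradPhi_nodes_spanning:
  assumes z: "inj_on z {..<d}" and v: "(v :: real vec) \<in> carrier_vec d"
    and orth: "\<And>k. k < d \<Longrightarrow> v \<bullet> gradPhi d (z k) = 0"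
  shows "v = 0\<^sub>v d"
proof -
  define P where "P = (\<Sum>i<d. monom (v $ i * real (Suc i)) i)"
  have poly_P: "poly P y = v \<bullet> gradPhi d y" for y
    unfolding P_def poly_sum poly_monom scalar_prod_gradPhi[OF v] by (simp add: mult_ac)
  have coeff_P: "coeff P i = (if i < d then v $ i * real (Suc i) else 0)" for i
    unfolding P_def coeff_sum coeff_monom by (cases "i < d") auto
  have "P = 0"
  proof (rule ccontr)
    assume "P \<noteq> 0"
    then have "d \<noteq> 0" unfolding P_def by auto
    have "d = card (z ` {..<d})" using card_image[OF z] by simp
    also have "\<dots> \<le> card {y. poly P y = 0}"
      using orth poly_P \<open>P \<noteq> 0\<close> by (intro card_mono poly_roots_finite) auto
    also have "\<dots> \<le> degree P" using card_poly_roots_bound[OF \<open>P \<noteq> 0\<close>] .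
    also have "\<dots> < d" using \<open>d \<noteq> 0\<close> by (intro degree_lessI) (auto simp: coeff_P)
    finally show False by simp
  qed
  show ?thesis
  proof (rule eq_vecI)
    fix i assume "i < dim_vec (0\<^sub>v d)"
    then show "v $ i = 0\<^sub>v d $ i" using coeff_P[of i] \<open>P = 0\<close> by simp
  qed (use v in simp)
qed

lemma scalar_prod_gradPhi_sq_le:
  assumes v: "(v :: real vec) \<in> carrier_vec d" and y: "\<bar>y\<bar> \<le> r"
  shows "(v \<bullet> gradPhi d y)\<^sup>2 \<le> (\<Sum>i<d. (real (Suc i) * r ^ i)\<^sup>2) * (v \<bullet> v)"
proof -
  have "gradPhi d y \<bullet> gradPhi d y = (\<Sum>i<d. (real (Suc i) * y ^ i)\<^sup>2)"
    by (simp add: scalar_prod_self_eq_sum_sq[of _ d] gradPhi_def)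
  also have "\<dots> \<le> (\<Sum>i<d. (real (Suc i) * r ^ i)\<^sup>2)"
  proof (intro sum_mono)
    fix i
    have "\<bar>y ^ i\<bar> \<le> r ^ i" using y by (simp add: power_abs power_mono)
    then have "\<bar>real (Suc i) * y ^ i\<bar> \<le> \<bar>real (Suc i) * r ^ i\<bar>"
      using y by (simp add: abs_mult)
    then show "(real (Suc i) * y ^ i)\<^sup>2 \<le> (real (Suc i) * r ^ i)\<^sup>2"
      by (simp only: abs_le_square_iff)
  qed
  finally have grad: "gradPhi d y \<bullet> gradPhi d y \<le> (\<Sum>i<d. (real (Suc i) * r ^ i)\<^sup>2)" .
  have "(v \<bullet> gradPhi d y)\<^sup>2 \<le> (v \<bullet> v) * (gradPhi d y \<bullet> gradPhi d y)"
    by (rule scalar_prod_sq_le[OF v gradPhi_carrier])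
  also have "\<dots> \<le> (v \<bullet> v) * (\<Sum>i<d. (real (Suc i) * r ^ i)\<^sup>2)"
    using grad by (intro mult_left_mono) auto
  finally show ?thesis by (simp add: mult.commute)
qed

lemma scalar_prod_sq_ge_perturbed:
  assumes v: "(v :: real vec) \<in> carrier_vec n" and u: "u \<in> carrier_vec n" and w: "w \<in> carrier_vec n"
  shows "(v \<bullet> w)\<^sup>2 / 2 - ((u - w) \<bullet> (u - w)) * (v \<bullet> v) \<le> (v \<bullet> u)\<^sup>2"
proof -
  define B where "B = v \<bullet> (u - w)"
  have "B\<^sup>2 \<le> ((u - w) \<bullet> (u - w)) * (v \<bullet> v)"
    unfolding B_def using scalar_prod_sq_le[OF v, of "u - w"] u w by (simp add: mult.commute)
  then have "(v \<bullet> w)\<^sup>2 / 2 - ((u - w) \<bullet> (u - w)) * (v \<bullet> v) \<le> (v \<bullet> w)\<^sup>2 / 2 - B\<^sup>2"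
    by simp
  also have "\<dots> \<le> (v \<bullet> w + B)\<^sup>2"
    using zero_le_power2[of "v \<bullet> w + 2 * B"] by (simp add: power2_eq_square algebra_simps)
  also have "v \<bullet> w + B = v \<bullet> u"
    unfolding B_def using v u w by (simp add: scalar_prod_minus_distrib)
  finally show ?thesis .
qed

text \<open>The increment \<open>\<delta>(t) (v\<^sup>T \<xi>(t))\<^sup>2\<close> of \<open>v\<^sup>T \<Sigma>(t)\<^sup>-\<^sup>1 v\<close> caused by the response \<open>y = x(t)\<close>.\<close>

definition excitation :: "nat \<Rightarrow> real \<Rightarrow> real \<Rightarrow> real vec \<Rightarrow> real \<Rightarrow> real" where
  "excitation d a b v y = (if y \<in> {a<..<b} then (v \<bullet> gradPhi d y)\<^sup>2 else 0)"

lemma excitation_nonneg [simp]: "0 \<le> excitation d a b v y"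
  by (simp add: excitation_def)

lemma gradPhi_near_nodes:
  fixes z :: "nat \<Rightarrow> real"
  assumes z: "\<And>k. k < d \<Longrightarrow> z k \<in> {a<..<b}" and e: "0 < e"
  obtains \<eta> where "0 < \<eta>"
    and "\<And>k r. k < d \<Longrightarrow> \<bar>r\<bar> \<le> \<eta> \<Longrightarrow> z k + r \<in> {a<..<b} \<and>
           (gradPhi d (z k + r) - gradPhi d (z k)) \<bullet> (gradPhi d (z k + r) - gradPhi d (z k)) < e"
proof -
  define D where "D k y = (gradPhi d y - gradPhi d (z k)) \<bullet> (gradPhi d y - gradPhi d (z k))" for k y
  have D_eq: "D k y = (\<Sum>i<d. (real (Suc i) * y ^ i - real (Suc i) * z k ^ i)\<^sup>2)" for k y
    unfolding D_def by (subst scalar_prod_self_eq_sum_sq[of _ d]) (auto simp: gradPhi_def)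
  have "\<forall>\<^sub>F r in nhds 0. \<forall>k\<in>{..<d}. z k + r \<in> {a<..<b} \<and> D k (z k + r) < e"
  proof (intro eventually_ball_finite ballI eventually_conj)
    fix k assume k: "k \<in> {..<d}"
    have "((\<lambda>r. z k + r) \<longlongrightarrow> z k) (nhds 0)"
      by (auto intro!: tendsto_eq_intros filterlim_ident)
    then show "\<forall>\<^sub>F r in nhds 0. z k + r \<in> {a<..<b}"
      using z k by (intro topological_tendstoD) auto
    have "((\<lambda>r. D k (z k + r)) \<longlongrightarrow> 0) (nhds 0)"
      unfolding D_eq by (auto intro!: tendsto_eq_intros filterlim_ident)
    then show "\<forall>\<^sub>F r in nhds 0. D k (z k + r) < e"
      using e by (rule order_tendstoD(2))
  qed simp
  then obtain \<eta> where "0 < \<eta>" "\<And>r. \<bar>r\<bar> \<le> \<eta> \<Longrightarrow> \<forall>k\<in>{..<d}. z k + r \<in> {a<..<b} \<and> D k (z k + r) < e"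
    unfolding eventually_nhds_metric_le dist_real_def by auto
  then show ?thesis using that unfolding D_def by blast
qed

lemma spanning_gradPhi_nodes:
  assumes "a < b"
  obtains z :: "nat \<Rightarrow> real" and \<mu> :: real where "\<And>k. z k \<in> {a<..<b}" and "0 < \<mu>"
    and "\<And>v. v \<in> carrier_vec d \<Longrightarrow> \<mu> * (v \<bullet> v) \<le> (\<Sum>k<d. (v \<bullet> gradPhi d (z k))\<^sup>2)"
proof -
  obtain z :: "nat \<Rightarrow> real" where "inj z" and z: "range z \<subseteq> {a<..<b}"
    using infinite_countable_subset[OF infinite_Ioo[OF assms]] by blast
  then have "inj_on z {..<d}" using inj_on_subset by blast
  then obtain \<mu> where "0 < \<mu>" "\<And>v. v \<in> carrier_vec d \<Longrightarrow> \<mu> * (v \<bullet> v) \<le> (\<Sum>k<d. (v \<bullet> gradPhi d (z k))\<^sup>2)"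
    using sum_sq_scalar_prod_lower_bound[of d "\<lambda>k. gradPhi d (z k)"] gradPhi_nodes_spanning by auto
  with z show ?thesis using that by blast
qed

lemma excitation_ge_near_node:
  assumes \<theta>: "\<theta> \<in> Theta_set d {a..b} m M" and m: "0 < m" and v: "v \<in> carrier_vec d"
    and \<eta>: "0 < \<eta>" "a \<le> z - \<eta>" "z + \<eta> \<le> b"
    and near: "\<And>r. \<bar>r\<bar> \<le> \<eta> \<Longrightarrow> z + r \<in> {a<..<b} \<and>
      (gradPhi d (z + r) - gradPhi d z) \<bullet> (gradPhi d (z + r) - gradPhi d z) < e"
    and p: "p \<in> {- (\<theta> \<bullet> gradPhi d (z + \<eta>)) .. - (\<theta> \<bullet> gradPhi d (z - \<eta>))}"
  shows "(v \<bullet> gradPhi d z)\<^sup>2 / 2 - e * (v \<bullet> v) \<le> excitation d a b v (best_response \<theta> {a..b} p)"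
proof -
  define y where "y = best_response \<theta> {a..b} p"
  have "y \<in> {z - \<eta> .. z + \<eta>}"
    unfolding y_def using \<eta> p by (intro best_response_mem_Icc[OF \<theta> m]) auto
  then have "\<bar>y - z\<bar> \<le> \<eta>" by auto
  with near[of "y - z"] have y: "y \<in> {a<..<b}"
    and close: "(gradPhi d y - gradPhi d z) \<bullet> (gradPhi d y - gradPhi d z) < e"
    by auto
  have "(v \<bullet> gradPhi d z)\<^sup>2 / 2 - e * (v \<bullet> v) \<le>
      (v \<bullet> gradPhi d z)\<^sup>2 / 2 - ((gradPhi d y - gradPhi d z) \<bullet> (gradPhi d y - gradPhi d z)) * (v \<bullet> v)"
    using close by (intro diff_left_mono mult_right_mono) auto
  also have "\<dots> \<le> (v \<bullet> gradPhi d y)\<^sup>2"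
    by (rule scalar_prod_sq_ge_perturbed[OF v gradPhi_carrier gradPhi_carrier])
  finally show ?thesis using y unfolding excitation_def y_def[symmetric] by simp
qed

lemma persistent_excitation:
  assumes \<theta>: "\<theta> \<in> Theta_set d {a..b} m M" and m: "0 < m" and ab: "a < b" and d: "0 < d"
  obtains P :: "nat \<Rightarrow> real set" and \<beta> :: "nat \<Rightarrow> real vec \<Rightarrow> real" and c :: real
  where "0 < c"
    and "\<And>k. k < d \<Longrightarrow> \<exists>\<alpha> \<gamma>. \<alpha> < \<gamma> \<and> P k = {\<alpha>..\<gamma>}"
    and "\<And>k v. 0 \<le> \<beta> k v"
    and "\<And>v. v \<in> carrier_vec d \<Longrightarrow> c * (v \<bullet> v) \<le> (\<Sum>k<d. \<beta> k v)"
    and "\<And>k p v. k < d \<Longrightarrow> p \<in> P k \<Longrightarrow> v \<in> carrier_vec d \<Longrightarrow>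
           \<beta> k v \<le> excitation d a b v (best_response \<theta> {a..b} p)"
proof -
  obtain z \<mu> where z: "\<And>k. z k \<in> {a<..<b}" and \<mu>: "0 < \<mu>"
    and nodes: "\<And>v. v \<in> carrier_vec d \<Longrightarrow> \<mu> * (v \<bullet> v) \<le> (\<Sum>k<d. (v \<bullet> gradPhi d (z k))\<^sup>2)"
    using spanning_gradPhi_nodes[OF ab] by blast
  define e where "e = \<mu> / (4 * real d)"
  have e: "0 < e" using \<mu> d by (simp add: e_def)
  obtain \<eta> where \<eta>: "0 < \<eta>" and near: "\<And>k r. k < d \<Longrightarrow> \<bar>r\<bar> \<le> \<eta> \<Longrightarrow> z k + r \<in> {a<..<b} \<and>
      (gradPhi d (z k + r) - gradPhi d (z k)) \<bullet> (gradPhi d (z k + r) - gradPhi d (z k)) < e"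
    using gradPhi_near_nodes[of d z a b e] z e by blast
  \<comment> \<open>the incentives whose best responses lie within \<open>\<eta>\<close> of the node \<open>z k\<close>\<close>
  define P where "P k = {- (\<theta> \<bullet> gradPhi d (z k + \<eta>)) .. - (\<theta> \<bullet> gradPhi d (z k - \<eta>))}" for k
  define \<beta> where "\<beta> k v = max 0 ((v \<bullet> gradPhi d (z k))\<^sup>2 / 2 - e * (v \<bullet> v))" for k v
  have inside: "a \<le> z k - \<eta>" "z k + \<eta> \<le> b" if "k < d" for k
    using near[OF that, of \<eta>] near[OF that, of "- \<eta>"] \<eta> by auto
  show ?thesis
  proof (rule that)
    show "0 < \<mu> / 4" using \<mu> by simp
    show "\<exists>\<alpha> \<gamma>. \<alpha> < \<gamma> \<and> P k = {\<alpha>..\<gamma>}" if "k < d" for k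
    proof (intro exI conjI)
      have "m * (z k + \<eta> - (z k - \<eta>)) \<le> \<theta> \<bullet> gradPhi d (z k + \<eta>) - \<theta> \<bullet> gradPhi d (z k - \<eta>)"
        using inside[OF that] \<eta> by (intro Theta_set_gradPhi_increasing[OF \<theta>]) auto
      moreover have "0 < m * (z k + \<eta> - (z k - \<eta>))" using m \<eta> by simp
      ultimately show "- (\<theta> \<bullet> gradPhi d (z k + \<eta>)) < - (\<theta> \<bullet> gradPhi d (z k - \<eta>))" by linarith
    qed (simp add: P_def)
    show "0 \<le> \<beta> k v" for k v by (simp add: \<beta>_def)
    show "\<mu> / 4 * (v \<bullet> v) \<le> (\<Sum>k<d. \<beta> k v)" if v: "v \<in> carrier_vec d" for v
    proof -
      have "\<mu> / 4 * (v \<bullet> v) \<le> (\<Sum>k<d. (v \<bullet> gradPhi d (z k))\<^sup>2) / 2 - real d * e * (v \<bullet> v)"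
        using nodes[OF v] d by (simp add: e_def)
      also have "\<dots> = (\<Sum>k<d. (v \<bullet> gradPhi d (z k))\<^sup>2 / 2 - e * (v \<bullet> v))"
        by (simp add: sum_subtractf sum_divide_distrib)
      also have "\<dots> \<le> (\<Sum>k<d. \<beta> k v)"
        unfolding \<beta>_def by (intro sum_mono) simp
      finally show ?thesis .
    qed
    show "\<beta> k v \<le> excitation d a b v (best_response \<theta> {a..b} p)"
      if "k < d" "p \<in> P k" "v \<in> carrier_vec d" for k p v
      using excitation_ge_near_node[OF \<theta> m that(3) \<eta> inside[OF that(1)] near[OF that(1)]] that(2)
      unfolding \<beta>_def P_def by simp
  qed
qed

section \<open>Rank-one updates of the information matrix\<close>

context
  fixes d :: nat and a b :: real and L :: "nat \<Rightarrow> real mat" and y :: "nat \<Rightarrow> real"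
  assumes L_0: "L 0 \<in> carrier_mat d d" "(L 0)\<^sup>T = L 0"
    and L_Suc: "\<And>t. L (Suc t) = L t +
      (if y (Suc t) \<in> interior {a..b} then outer (gradPhi d (y (Suc t))) else 0\<^sub>m d d)"
begin

lemma rank_one_updates_carrier_symmetric: "L t \<in> carrier_mat d d \<and> (L t)\<^sup>T = L t"
proof (induction t)
  case (Suc t)
  define U where "U = (if y (Suc t) \<in> interior {a..b} then outer (gradPhi d (y (Suc t))) else 0\<^sub>m d d)"
  have U: "U \<in> carrier_mat d d" "U\<^sup>T = U" unfolding U_def by auto
  have "L (Suc t) = L t + U" unfolding U_def by (rule L_Suc)
  then show ?case using Suc U by (simp add: transpose_add[of "L t" d d U])
qed (use L_0 in simp)

lemma rank_one_updates_quadratic_form: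
  assumes v: "v \<in> carrier_vec d"
  shows "v \<bullet> (L t *\<^sub>v v) = v \<bullet> (L 0 *\<^sub>v v) + (\<Sum>s\<in>{1..t}. excitation d a b v (y s))"
proof (induction t)
  case (Suc t)
  define U where "U = (if y (Suc t) \<in> interior {a..b} then outer (gradPhi d (y (Suc t))) else 0\<^sub>m d d)"
  have U: "U \<in> carrier_mat d d" unfolding U_def by auto
  have L: "L t \<in> carrier_mat d d" using rank_one_updates_carrier_symmetric by blast
  have "0\<^sub>m d d *\<^sub>v v = 0\<^sub>v d" using v by (intro eq_vecI) auto
  then have "v \<bullet> (U *\<^sub>v v) = excitation d a b v (y (Suc t))"
    using quadratic_form_outer[OF v gradPhi_carrier] v
    by (simp add: U_def excitation_def)
  moreover have "L (Suc t) = L t + U" unfolding U_def by (rule L_Suc)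
  ultimately have "v \<bullet> (L (Suc t) *\<^sub>v v) = v \<bullet> (L t *\<^sub>v v) + excitation d a b v (y (Suc t))"
    using L U v by (simp add: add_mult_distrib_mat_vec scalar_prod_add_distrib[of _ d])
  then show ?case using Suc by simp
qed simp

lemma lambda_min_rank_one_updates_ge:
  assumes d: "0 < d" and L_0_psd: "\<And>v. v \<in> carrier_vec d \<Longrightarrow> 0 \<le> v \<bullet> (L 0 *\<^sub>v v)"
    and exc: "\<And>v. v \<in> carrier_vec d \<Longrightarrow> c * (v \<bullet> v) \<le> (\<Sum>s\<in>{1..t}. excitation d a b v (y s))"
  shows "c \<le> lambda_min (L t)"
  using rank_one_updates_carrier_symmetric[of t] d
proof (intro lambda_min_ge)
  fix v :: "real vec" assume v: "v \<in> carrier_vec d"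
  then show "c * (v \<bullet> v) \<le> v \<bullet> (L t *\<^sub>v v)"
    using exc[OF v] L_0_psd[OF v] rank_one_updates_quadratic_form[OF v, of t] by linarith
qed auto

lemma lambda_min_rank_one_updates_le:
  assumes d: "0 < d"
  obtains C where "\<And>t. 1 \<le> t \<Longrightarrow> lambda_min (L t) \<le> C * real t"
proof -
  obtain C\<^sub>0 where C\<^sub>0: "0 \<le> C\<^sub>0" "\<And>v. v \<in> carrier_vec d \<Longrightarrow> v \<bullet> (L 0 *\<^sub>v v) \<le> C\<^sub>0 * (v \<bullet> v)"
    using quadratic_form_le[OF L_0(1)] by blast
  define K where "K = (\<Sum>i<d. (real (Suc i) * (\<bar>a\<bar> + \<bar>b\<bar>) ^ i)\<^sup>2)"
  have K: "0 \<le> K" unfolding K_def by (intro sum_nonneg) auto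
  have exc: "excitation d a b v z \<le> K * (v \<bullet> v)" if "v \<in> carrier_vec d" for v z
    using scalar_prod_gradPhi_sq_le[OF that, of z "\<bar>a\<bar> + \<bar>b\<bar>"] K
    unfolding excitation_def K_def by auto
  show thesis
  proof (rule that)
    fix t :: nat assume t: "1 \<le> t"
    show "lambda_min (L t) \<le> (C\<^sub>0 + K) * real t"
      using rank_one_updates_carrier_symmetric[of t] d
    proof (intro lambda_min_le)
      fix v :: "real vec" assume v: "v \<in> carrier_vec d"
      have "(\<Sum>s\<in>{1..t}. excitation d a b v (y s)) \<le> real t * (K * (v \<bullet> v))"
        using sum_bounded_above[of "{1..t}" "\<lambda>s. excitation d a b v (y s)"] exc[OF v] by simp
      moreover have "C\<^sub>0 * 1 \<le> C\<^sub>0 * real t"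
        using t C\<^sub>0(1) by (intro mult_left_mono) auto
      then have "C\<^sub>0 * (v \<bullet> v) \<le> C\<^sub>0 * real t * (v \<bullet> v)"
        by (intro mult_right_mono) auto
      ultimately show "v \<bullet> (L t *\<^sub>v v) \<le> (C\<^sub>0 + K) * real t * (v \<bullet> v)"
        using C\<^sub>0(2)[OF v] rank_one_updates_quadratic_form[OF v, of t] by (simp add: algebra_simps)
    qed auto
  qed
qed

lemma lambda_min_linear_growth:
  assumes d: "0 < d" and L_0_psd: "\<And>v. v \<in> carrier_vec d \<Longrightarrow> 0 \<le> v \<bullet> (L 0 *\<^sub>v v)"
    and c: "0 < c" and exc: "\<forall>\<^sub>F t in sequentially. \<forall>v\<in>carrier_vec d.
      c * real t * (v \<bullet> v) \<le> (\<Sum>s\<in>{1..t}. excitation d a b v (y s))"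
  shows "\<exists>c1 c2. 0 < c1 \<and> c1 \<le> c2 \<and>
    (\<forall>\<^sub>F t in sequentially. c1 * real t \<le> lambda_min (L t) \<and> lambda_min (L t) \<le> c2 * real t)"
proof -
  obtain C where C: "\<And>t. 1 \<le> t \<Longrightarrow> lambda_min (L t) \<le> C * real t"
    using lambda_min_rank_one_updates_le[OF d] by blast
  have "\<forall>\<^sub>F t in sequentially. c * real t \<le> lambda_min (L t) \<and> lambda_min (L t) \<le> max c C * real t"
    using exc eventually_ge_at_top[of 1]
  proof eventually_elim
    case (elim t)
    have "c * real t \<le> lambda_min (L t)"
      using elim(1) by (intro lambda_min_rank_one_updates_ge[OF d L_0_psd]) auto
    moreover have "C * real t \<le> max c C * real t" by (intro mult_right_mono) auto
    ultimately show ?case using C[OF elim(2)] by linarith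
  qed
  then show ?thesis using c by (intro exI[of _ c] exI[of _ "max c C"]) auto
qed

end

section \<open>Visits of Gaussian incentives to intervals\<close>

lemma (in prob_space) prob_few_visits_le:
  assumes ind: "indep_vars (\<lambda>_. borel) X {1..}" and A: "A \<in> sets borel"
    and q: "\<And>s. 1 \<le> s \<Longrightarrow> prob (X s -` A \<inter> space M) = q" and q_pos: "0 < q"
  shows "prob {\<omega> \<in> space M. (\<Sum>s\<in>{1..t}. indicator A (X s \<omega>)) \<le> q * real t / 2}
    \<le> exp (- (q\<^sup>2 / 2)) ^ t"
proof (cases "t = 0")
  case False
  define Y :: "nat \<Rightarrow> 'a \<Rightarrow> real" where "Y s \<omega> = indicator A (X s \<omega>)" for s \<omega>
  have indY: "indep_vars (\<lambda>_. borel) Y {1..t}"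
    unfolding Y_def by (rule indep_vars_compose2[OF indep_vars_subset[OF ind]]) (use A in auto)
  have EY: "expectation (Y s) = q" if "1 \<le> s" for s
  proof -
    have "expectation (Y s) = expectation (indicator (X s -` A \<inter> space M))"
      by (intro Bochner_Integration.integral_cong) (auto simp: Y_def indicator_def)
    also have "\<dots> = q" using q[OF that] by (simp add: Int_absorb2 inf_assoc)
    finally show ?thesis .
  qed
  interpret Hoeffding_ineq M "{1..t}" Y "\<lambda>_. 0" "\<lambda>_. 1" "\<Sum>s\<in>{1..t}. expectation (Y s)"
    by unfold_locales (use indY in \<open>simp_all add: Y_def indicator_def\<close>)
  have "prob {\<omega> \<in> space M. (\<Sum>s\<in>{1..t}. indicator A (X s \<omega>)) \<le> q * real t / 2} =
      prob {\<omega> \<in> space M. (\<Sum>s\<in>{1..t}. Y s \<omega>) \<le> (\<Sum>s\<in>{1..t}. expectation (Y s)) - q * real t / 2}"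
    using EY by (simp add: Y_def algebra_simps)
  also have "\<dots> \<le> exp (- 2 * (q * real t / 2)\<^sup>2 / (\<Sum>s\<in>{1..t}. (1 - 0)\<^sup>2))"
    by (rule Hoeffding_ineq_le) (use q_pos False in auto)
  also have "\<dots> = exp (- (q\<^sup>2 / 2)) ^ t"
    using False by (simp add: power2_eq_square field_simps flip: exp_of_nat_mult)
  finally show ?thesis .
qed simp

lemma (in prob_space) AE_eventually_many_visits:
  assumes ind: "indep_vars (\<lambda>_. borel) X {1..}" and A: "A \<in> sets borel"
    and q: "\<And>s. 1 \<le> s \<Longrightarrow> prob (X s -` A \<inter> space M) = q" and q_pos: "0 < q"
  shows "AE \<omega> in M. \<forall>\<^sub>F t in sequentially. q * real t / 2 < real (card {s\<in>{1..t}. X s \<omega> \<in> A})"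
proof -
  define B where "B t = {\<omega> \<in> space M. (\<Sum>s\<in>{1..t}. indicator A (X s \<omega>)) \<le> q * real t / 2}" for t
  have B_sets: "B t \<in> sets M" for t
  proof -
    have "X s \<in> borel_measurable M" if "1 \<le> s" for s
      using ind that unfolding indep_vars_def by auto
    then show ?thesis unfolding B_def using A by measurable
  qed
  have "summable (\<lambda>t. prob (B t))"
  proof (rule summable_comparison_test[OF _ summable_geometric])
    show "\<exists>N. \<forall>t\<ge>N. norm (prob (B t)) \<le> exp (- (q\<^sup>2 / 2)) ^ t"
      using prob_few_visits_le[OF ind A q q_pos] by (auto simp: B_def)
    show "norm (exp (- (q\<^sup>2 / 2))) < 1" using q_pos by simp
  qed
  then have BC: "AE \<omega> in M. \<forall>\<^sub>F t in sequentially. \<omega> \<in> space M - B t"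
    by (intro borel_cantelli_AE1 B_sets) (simp_all add: emeasure_eq_measure)
  have card_eq: "(\<Sum>s\<in>{1..t}. indicator A (X s \<omega>)) = real (card {s\<in>{1..t}. X s \<omega> \<in> A})" for t \<omega>
  proof -
    have "(\<Sum>s\<in>{1..t}. indicator A (X s \<omega>)) = real (card ({1..t} \<inter> {s. X s \<omega> \<in> A}))"
      by (simp add: indicator_def)
    also have "{1..t} \<inter> {s. X s \<omega> \<in> A} = {s\<in>{1..t}. X s \<omega> \<in> A}" by blast
    finally show ?thesis .
  qed
  from BC show ?thesis
  proof (rule eventually_mono)
    fix \<omega> assume "\<forall>\<^sub>F t in sequentially. \<omega> \<in> space M - B t"
    then show "\<forall>\<^sub>F t in sequentially. q * real t / 2 < real (card {s\<in>{1..t}. X s \<omega> \<in> A})"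
    proof (rule eventually_mono)
      fix t assume "\<omega> \<in> space M - B t"
      then have "q * real t / 2 < (\<Sum>s\<in>{1..t}. indicator A (X s \<omega>))" unfolding B_def by auto
      then show "q * real t / 2 < real (card {s\<in>{1..t}. X s \<omega> \<in> A})" unfolding card_eq .
    qed
  qed
qed

lemma (in prob_space) prob_normal_Icc_pos:
  assumes X: "distributed M lborel X (\<lambda>y. ennreal (normal_density \<mu> \<sigma> y))"
    and \<sigma>: "0 < \<sigma>" and \<alpha>\<gamma>: "\<alpha> < \<gamma>"
  shows "0 < prob (X -` {\<alpha>..\<gamma>} \<inter> space M)"
proof -
  have E: "emeasure M (X -` {\<alpha>..\<gamma>} \<inter> space M) =
      (\<integral>\<^sup>+y. ennreal (normal_density \<mu> \<sigma> y) * indicator {\<alpha>..\<gamma>} y \<partial>lborel)"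
    by (rule distributed_emeasure[OF X]) simp
  have "emeasure M (X -` {\<alpha>..\<gamma>} \<inter> space M) \<noteq> 0"
  proof
    assume "emeasure M (X -` {\<alpha>..\<gamma>} \<inter> space M) = 0"
    then have "AE y in lborel. ennreal (normal_density \<mu> \<sigma> y) * indicator {\<alpha>..\<gamma>} y = 0"
      unfolding E by (subst (asm) nn_integral_0_iff_AE) auto
    then have "AE y in lborel. y \<notin> {\<alpha>..\<gamma>}"
      by (rule AE_mp) (use normal_density_pos[OF \<sigma>, THEN less_imp_neq, THEN not_sym]
          in \<open>auto simp: indicator_def\<close>)
    then have "{\<alpha>..\<gamma>} \<in> null_sets lborel" by (subst AE_iff_null_sets) auto
    then show False using \<alpha>\<gamma> by (auto simp: null_sets_def)
  qed
  then show ?thesis by (simp add: emeasure_eq_measure zero_less_measure_iff)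
qed

lemma (in prob_space) prob_eq_if_same_distribution:
  assumes "distributed M N X f" "distributed M N Y f" "A \<in> sets N"
  shows "prob (X -` A \<inter> space M) = prob (Y -` A \<inter> space M)"
proof -
  have "prob (Z -` A \<inter> space M) = measure (density N f) A" if "distributed M N Z f" for Z
    using measure_distr[OF distributed_measurable[OF that] assms(3)]
      distributed_distr_eq_density[OF that] by simp
  then show ?thesis using assms(1,2) by simp
qed

lemma eventually_uniform_linear_lower_bound:
  fixes q :: "nat \<Rightarrow> real" and f :: "nat \<Rightarrow> nat \<Rightarrow> real"
  assumes q: "\<And>k. k < n \<Longrightarrow> 0 < q k"
    and ev: "\<forall>k\<in>{..<n}. \<forall>\<^sub>F t in sequentially. q k * real t \<le> f k t"
  shows "\<exists>q\<^sub>0>0. \<forall>\<^sub>F t in sequentially. \<forall>k<n. q\<^sub>0 * real t \<le> f k t"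
proof -
  \<comment> \<open>\<open>insert 1\<close> avoids \<open>Min {}\<close> when \<open>n = 0\<close>\<close>
  define q\<^sub>0 where "q\<^sub>0 = Min (insert 1 (q ` {..<n}))"
  have "0 < q\<^sub>0" unfolding q\<^sub>0_def using q by (subst Min_gr_iff) auto
  moreover have "q\<^sub>0 * real t \<le> q k * real t" if "k < n" for k t
    unfolding q\<^sub>0_def using that by (intro mult_right_mono Min_le) auto
  then have "\<forall>\<^sub>F t in sequentially. \<forall>k<n. q\<^sub>0 * real t \<le> f k t"
    using eventually_ball_finite[OF _ ev] by (auto elim!: eventually_mono intro: order_trans)
  ultimately show ?thesis by blast
qed

lemma (in prob_space) AE_eventually_visits_intervals:
  fixes n :: nat
  assumes \<sigma>: "0 < \<sigma>" and ind: "indep_vars (\<lambda>_. borel) X {1..}"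
    and normal: "\<And>t. 1 \<le> t \<Longrightarrow> distributed M lborel (X t) (\<lambda>y. ennreal (normal_density 0 \<sigma> y))"
    and P: "\<And>k. k < n \<Longrightarrow> \<exists>\<alpha> \<gamma>. \<alpha> < \<gamma> \<and> P k = {\<alpha>..\<gamma>}"
  shows "AE \<omega> in M. \<exists>q>0. \<forall>\<^sub>F t in sequentially. \<forall>k<n. q * real t \<le> real (card {s\<in>{1..t}. X s \<omega> \<in> P k})"
proof -
  define q where "q k = prob (X 1 -` P k \<inter> space M) / 2" for k
  have q_pos: "0 < q k"
    and visits: "AE \<omega> in M. \<forall>\<^sub>F t in sequentially. q k * real t \<le> real (card {s\<in>{1..t}. X s \<omega> \<in> P k})"
    if k: "k < n" for k
  proof -
    obtain \<alpha> \<gamma> where \<alpha>\<gamma>: "\<alpha> < \<gamma>" "P k = {\<alpha>..\<gamma>}" using P[OF k] by blast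
    show "0 < q k" unfolding q_def \<alpha>\<gamma>(2) using prob_normal_Icc_pos[OF normal[of 1] \<sigma> \<alpha>\<gamma>(1)] by simp
    have "prob (X s -` P k \<inter> space M) = 2 * q k" if "1 \<le> s" for s
      unfolding q_def using prob_eq_if_same_distribution[OF normal[OF that] normal[of 1]] \<alpha>\<gamma>(2) by simp
    moreover have "P k \<in> sets borel" "0 < 2 * q k" using \<alpha>\<gamma>(2) \<open>0 < q k\<close> by simp_all
    ultimately have "AE \<omega> in M. \<forall>\<^sub>F t in sequentially. 2 * q k * real t / 2 < real (card {s\<in>{1..t}. X s \<omega> \<in> P k})"
      using AE_eventually_many_visits[OF ind] by blast
    then show "AE \<omega> in M. \<forall>\<^sub>F t in sequentially. q k * real t \<le> real (card {s\<in>{1..t}. X s \<omega> \<in> P k})"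
      by (rule eventually_mono) (auto elim: eventually_mono)
  qed
  have "AE \<omega> in M. \<forall>k\<in>{..<n}. \<forall>\<^sub>F t in sequentially. q k * real t \<le> real (card {s\<in>{1..t}. X s \<omega> \<in> P k})"
    using visits by (subst AE_ball_countable) auto
  then show ?thesis
    by (rule eventually_mono) (rule eventually_uniform_linear_lower_bound[OF q_pos])
qed

section \<open>Linear growth of the smallest eigenvalue\<close>

lemma sum_le_by_visit_counts:
  fixes F :: "'a \<Rightarrow> real" and \<beta> :: "nat \<Rightarrow> real" and A :: "nat \<Rightarrow> 'a set"
  assumes S: "finite S" and F: "\<And>s. s \<in> S \<Longrightarrow> 0 \<le> F s" and \<beta>: "\<And>k. k < d \<Longrightarrow> 0 \<le> \<beta> k"
    and A: "\<And>k. k < d \<Longrightarrow> A k \<subseteq> S" and \<beta>F: "\<And>k s. k < d \<Longrightarrow> s \<in> A k \<Longrightarrow> \<beta> k \<le> F s"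
    and N: "\<And>k. k < d \<Longrightarrow> N \<le> real (card (A k))"
  shows "N * (\<Sum>k<d. \<beta> k) \<le> real d * (\<Sum>s\<in>S. F s)"
proof -
  have "N * (\<Sum>k<d. \<beta> k) = (\<Sum>k<d. N * \<beta> k)" by (simp add: sum_distrib_left)
  also have "\<dots> \<le> (\<Sum>k<d. \<Sum>s\<in>A k. F s)"
  proof (rule sum_mono)
    fix k assume "k \<in> {..<d}"
    then have k: "k < d" by simp
    have "N * \<beta> k \<le> real (card (A k)) * \<beta> k" using N[OF k] \<beta>[OF k] by (rule mult_right_mono)
    also have "\<dots> = (\<Sum>s\<in>A k. \<beta> k)" by simp
    also have "\<dots> \<le> (\<Sum>s\<in>A k. F s)" using \<beta>F[OF k] by (rule sum_mono)
    finally show "N * \<beta> k \<le> (\<Sum>s\<in>A k. F s)" .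
  qed
  also have "\<dots> \<le> (\<Sum>k<d. \<Sum>s\<in>S. F s)"
    using S A F by (intro sum_mono sum_mono2) auto
  also have "\<dots> = real d * (\<Sum>s\<in>S. F s)" by simp
  finally show ?thesis .
qed

lemma (in prob_space) AE_eventually_excitation_linear:
  assumes d: "0 < d" and ab: "a < b" and m: "0 < m" and \<theta>: "\<theta> \<in> Theta_set d {a..b} m m'"
    and \<sigma>: "0 < \<sigma>" and ind: "indep_vars (\<lambda>_. borel) p {1..}"
    and normal: "\<And>t. 1 \<le> t \<Longrightarrow> distributed M lborel (p t) (\<lambda>y. ennreal (normal_density 0 \<sigma> y))"
    and x: "\<And>t \<omega>. 1 \<le> t \<Longrightarrow> x t \<omega> = best_response \<theta> {a..b} (p t \<omega>)"
  shows "AE \<omega> in M. \<exists>c>0. \<forall>\<^sub>F t in sequentially. \<forall>v\<in>carrier_vec d.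
           c * real t * (v \<bullet> v) \<le> (\<Sum>s\<in>{1..t}. excitation d a b v (x s \<omega>))"
proof -
  obtain P :: "nat \<Rightarrow> real set" and \<beta> :: "nat \<Rightarrow> real vec \<Rightarrow> real" and c :: real
    where c: "0 < c" and P: "\<And>k. k < d \<Longrightarrow> \<exists>\<alpha> \<gamma>. \<alpha> < \<gamma> \<and> P k = {\<alpha>..\<gamma>}"
    and \<beta>_nonneg: "\<And>k v. 0 \<le> \<beta> k v"
    and \<beta>_sum: "\<And>v. v \<in> carrier_vec d \<Longrightarrow> c * (v \<bullet> v) \<le> (\<Sum>k<d. \<beta> k v)"
    and \<beta>_exc: "\<And>k p v. k < d \<Longrightarrow> p \<in> P k \<Longrightarrow> v \<in> carrier_vec d \<Longrightarrow>
      \<beta> k v \<le> excitation d a b v (best_response \<theta> {a..b} p)"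
    by (rule persistent_excitation[OF \<theta> m ab d]) (rule that)
  have "AE \<omega> in M. \<exists>q>0. \<forall>\<^sub>F t in sequentially. \<forall>k<d. q * real t \<le> real (card {s\<in>{1..t}. p s \<omega> \<in> P k})"
    using \<sigma> ind normal P by (rule AE_eventually_visits_intervals)
  then show ?thesis
  proof (rule eventually_mono, elim exE conjE)
    fix \<omega> q assume q: "0 < q"
      and visits: "\<forall>\<^sub>F t in sequentially. \<forall>k<d. q * real t \<le> real (card {s\<in>{1..t}. p s \<omega> \<in> P k})"
    have "\<forall>\<^sub>F t in sequentially. \<forall>v\<in>carrier_vec d.
        q * c / real d * real t * (v \<bullet> v) \<le> (\<Sum>s\<in>{1..t}. excitation d a b v (x s \<omega>))"
      using visits
    proof (rule eventually_mono, intro ballI)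
      fix t :: nat and v :: "real vec"
      assume count: "\<forall>k<d. q * real t \<le> real (card {s\<in>{1..t}. p s \<omega> \<in> P k})"
        and v: "v \<in> carrier_vec d"
      have "q * c / real d * real t * (v \<bullet> v) = q * real t * (c * (v \<bullet> v)) / real d"
        by simp
      also have "\<dots> \<le> q * real t * (\<Sum>k<d. \<beta> k v) / real d"
        using \<beta>_sum[OF v] q by (intro divide_right_mono mult_left_mono) auto
      also have "q * real t * (\<Sum>k<d. \<beta> k v) \<le> real d * (\<Sum>s\<in>{1..t}. excitation d a b v (x s \<omega>))"
      proof (rule sum_le_by_visit_counts[where A = "\<lambda>k. {s\<in>{1..t}. p s \<omega> \<in> P k}"])
        show "\<beta> k v \<le> excitation d a b v (x s \<omega>)" if "k < d" "s \<in> {s\<in>{1..t}. p s \<omega> \<in> P k}" for k s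
          using \<beta>_exc[OF that(1) _ v, of "p s \<omega>"] x[of s \<omega>] that(2) by auto
      qed (use count \<beta>_nonneg in auto)
      finally show "q * c / real d * real t * (v \<bullet> v) \<le> (\<Sum>s\<in>{1..t}. excitation d a b v (x s \<omega>))"
        using d by (simp add: divide_right_mono)
    qed
    moreover have "0 < q * c / real d" using q c d by simp
    ultimately show "\<exists>c>0. \<forall>\<^sub>F t in sequentially. \<forall>v\<in>carrier_vec d.
        c * real t * (v \<bullet> v) \<le> (\<Sum>s\<in>{1..t}. excitation d a b v (x s \<omega>))" by blast
  qed
qed

theorem theorem2:
  fixes M :: "'w measure"
    and d :: nat and a b m\<^sub>i M\<^sub>i \<sigma>2 :: real and \<theta> :: "real vec"
    and p :: "nat \<Rightarrow> 'w \<Rightarrow> real" and x :: "nat \<Rightarrow> 'w \<Rightarrow> real"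
    and Sigma0 :: "real mat" and Lam :: "nat \<Rightarrow> 'w \<Rightarrow> real mat"
  assumes "prob_space M"
    and "d > 0" and "a < b" and "0 < m\<^sub>i" and "m\<^sub>i \<le> M\<^sub>i"
    and "\<theta> \<in> Theta_set d {a..b} m\<^sub>i M\<^sub>i"
    and "\<sigma>2 > 0"
    and "prob_space.indep_vars M (\<lambda>_. borel) p {1..}"
    and "\<And>t. t \<ge> 1 \<Longrightarrow>
           distributed M lborel (p t) (\<lambda>y. ennreal (normal_density 0 (sqrt \<sigma>2) y))"
    and "\<And>t \<omega>. t \<ge> 1 \<Longrightarrow> x t \<omega> = best_response \<theta> {a..b} (p t \<omega>)"
    and "Sigma0 \<in> carrier_mat d d" and "pos_def Sigma0"
    and "\<And>\<omega>. Lam 0 \<omega> \<in> carrier_mat d d \<and> Lam 0 \<omega> * Sigma0 = 1\<^sub>m d"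
    and "\<And>t \<omega>. Lam (Suc t) \<omega> = Lam t \<omega> +
           (if x (Suc t) \<omega> \<in> interior {a..b} then outer (gradPhi d (x (Suc t) \<omega>))
            else 0\<^sub>m d d)"
  shows "AE \<omega> in M. \<exists>c1 c2. 0 < c1 \<and> c1 \<le> c2 \<and>
           (\<forall>\<^sub>F t in sequentially. c1 * real t \<le> lambda_min (Lam t \<omega>) \<and>
                                    lambda_min (Lam t \<omega>) \<le> c2 * real t)"
proof -
  interpret prob_space M by fact
  have Lam_0: "Lam 0 \<omega> \<in> carrier_mat d d" "(Lam 0 \<omega>)\<^sup>T = Lam 0 \<omega>"
    "\<And>v. v \<in> carrier_vec d \<Longrightarrow> 0 \<le> v \<bullet> (Lam 0 \<omega> *\<^sub>v v)" for \<omega>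
    using pos_def_inverse[OF assms(11,12)] assms(13)[of \<omega>] by auto
  have "AE \<omega> in M. \<exists>c>0. \<forall>\<^sub>F t in sequentially. \<forall>v\<in>carrier_vec d.
      c * real t * (v \<bullet> v) \<le> (\<Sum>s\<in>{1..t}. excitation d a b v (x s \<omega>))"
    using AE_eventually_excitation_linear[OF assms(2,3,4,6) _ assms(8-10)] assms(7) by simp
  then show ?thesis
  proof (rule eventually_mono, elim exE conjE)
    fix \<omega> c assume "0 < c" and "\<forall>\<^sub>F t in sequentially. \<forall>v\<in>carrier_vec d.
      c * real t * (v \<bullet> v) \<le> (\<Sum>s\<in>{1..t}. excitation d a b v (x s \<omega>))"
    then show "\<exists>c1 c2. 0 < c1 \<and> c1 \<le> c2 \<and> (\<forall>\<^sub>F t in sequentially.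
        c1 * real t \<le> lambda_min (Lam t \<omega>) \<and> lambda_min (Lam t \<omega>) \<le> c2 * real t)"
      using lambda_min_linear_growth[where L = "\<lambda>t. Lam t \<omega>" and y = "\<lambda>t. x t \<omega>",
            OF Lam_0(1,2) assms(14) assms(2) Lam_0(3)] by blast
  qed
qed

end
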